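(* Let $\mathcal C\in\{\mathbb{H},\mathbb{O}\}$, $F\in\{\mathbb{R},\mathbb{C}\}$ and $n\ge2$. Then $\triangle_{\mathcal C}\otimes1^{\otimes(n-2)}$ commutes and associates with all elements of $\mathrm{Sym}^n\mathcal C_F$. In particular, $\triangle^{(n)}_{\mathcal C}$ lies in the center of $\mathrm{Sym}^n\mathcal C_F$ (i.e. commutes and associates with all its elements), and hence $F[\triangle^{(n)}_{\mathcal C}]$ is a commutative and associative $F$-algebra.
   Context: $\mathbb{O}$ is the Cayley octonion algebra over $\mathbb{R}$ with basis $e_0=1,e_1,\dots,e_7$; $1,e_1,e_2,e_3$ span the quaternion subalgebra $\mathbb{H}$ ($e_i^2=-1$, $e_1e_2=-e_2e_1=e_3$, $e_2e_3=-e_3e_2=e_1$, $e_3e_1=-e_1e_3=e_2$), and $\mathbb{O}=\mathbb{H}\oplus\mathbb{H}e_4$ is the Cayley–Dickson double ($e_4^2=-1$, $e_{i+4}=e_ie_4$, $(x+ye_4)(z+we_4)=(xz-\bar wy)+(wx+y\bar z)e_4$). $\mathcal C_F=\mathcal C\otimes_\mathbb{R}F$; $\mathcal C_F^{\otimes n}$ is the tensor power over $F$ with componentwise multiplication; $\mathfrak S_n$ acts by $\sigma(x_1\otimes\cdots\otimes x_n)=x_{\sigma^{-1}(1)}\otimes\cdots\otimes x_{\sigma^{-1}(n)}$; $x^\vee=\frac1{n!}\sum_\sigma\sigma(x)$; $\mathrm{Sym}^n\mathcal C_F$ is the algebra of $\mathfrak S_n$-fixed tensors. With $d=\dim_\mathbb{R}\mathcal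 C$, $\triangle_{\mathcal C}=\frac1d\sum_{i=0}^{d-1}e_i\otimes e_i$ and $\triangle^{(n)}_{\mathcal C}=(\triangle_{\mathcal C}\otimes1^{\otimes(n-2)})^\vee$. An element $z$ commutes and associates with $x$ (for all $y$) if $zx=xz$ and $(zx)y=z(xy)$, $(xz)y=x(zy)$, $(xy)z=x(yz)$. *)

theory Defs
  imports "HOL-Combinatorics.Permutations" Complex_Main
begin

text \<open>Elements of C_F (C = H or O, F = R or C) are coefficient vectors
  nat => F with respect to the basis e_0 = 1, e_1, ..., e_(d-1); coordinates at
  indices >= d are 0.\<close>

datatype cd_alg = Quat | Oct

fun dim :: "cd_alg \<Rightarrow> nat" where
  "dim Quat = 4" | "dim Oct = 8"

text \<open>Hamilton product: e_i^2 = -1, e1 e2 = e3, e2 e3 = e1, e3 e1 = e2 (anticommuting).\<close>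
definition qmul :: "(nat \<Rightarrow> 'a::comm_ring_1) \<Rightarrow> (nat \<Rightarrow> 'a) \<Rightarrow> nat \<Rightarrow> 'a" where
  "qmul a b = (\<lambda>k.
     if k = 0 then a 0 * b 0 - a 1 * b 1 - a 2 * b 2 - a 3 * b 3
     else if k = 1 then a 0 * b 1 + a 1 * b 0 + a 2 * b 3 - a 3 * b 2
     else if k = 2 then a 0 * b 2 - a 1 * b 3 + a 2 * b 0 + a 3 * b 1
     else if k = 3 then a 0 * b 3 + a 1 * b 2 - a 2 * b 1 + a 3 * b 0
     else 0)"

definition qconj :: "(nat \<Rightarrow> 'a::comm_ring_1) \<Rightarrow> nat \<Rightarrow> 'a" where
  "qconj a = (\<lambda>k. if k = 0 then a 0 else if k < 4 then - a k else 0)"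

definition lo_part :: "(nat \<Rightarrow> 'a::comm_ring_1) \<Rightarrow> nat \<Rightarrow> 'a" where
  "lo_part v = (\<lambda>k. if k < 4 then v k else 0)"

definition hi_part :: "(nat \<Rightarrow> 'a::comm_ring_1) \<Rightarrow> nat \<Rightarrow> 'a" where
  "hi_part v = (\<lambda>k. if k < 4 then v (k + 4) else 0)"

text \<open>Cayley--Dickson double: (x + y e4)(z + w e4) = (xz - conj(w) y) + (w x + y conj(z)) e4,
  with e_(i+4) = e_i e_4, so x = coordinates 0..3 and y = coordinates 4..7.\<close>
definition omul :: "(nat \<Rightarrow> 'a::comm_ring_1) \<Rightarrow> (nat \<Rightarrow> 'a) \<Rightarrow> nat \<Rightarrow> 'a" where
  "omul a b = (\<lambda>k.
     if k < 4 then qmul (lo_part a) (lo_part b) k - qmul (qconj (hi_part b)) (hi_part a) k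
     else if k < 8 then qmul (hi_part b) (lo_part a) (k - 4) + qmul (hi_part a) (qconj (lo_part b)) (k - 4)
     else 0)"

fun cmul :: "cd_alg \<Rightarrow> (nat \<Rightarrow> 'a::comm_ring_1) \<Rightarrow> (nat \<Rightarrow> 'a) \<Rightarrow> nat \<Rightarrow> 'a" where
  "cmul Quat a b = qmul a b"
| "cmul Oct a b = omul a b"

definition bvec :: "nat \<Rightarrow> nat \<Rightarrow> 'a::comm_ring_1" where
  "bvec i = (\<lambda>k. if k = i then 1 else 0)"

text \<open>C_F^{\<otimes>n}: coefficient functions on index lists I = (i_1,...,i_n), i_k < d,
  i.e. coordinates w.r.t. the basis e_(i_1) \<otimes> ... \<otimes> e_(i_n).\<close>
definition valid_idx :: "cd_alg \<Rightarrow> nat \<Rightarrow> nat list set" where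
  "valid_idx C n = {I. length I = n \<and> set I \<subseteq> {..<dim C}}"

definition tensor_space :: "cd_alg \<Rightarrow> nat \<Rightarrow> (nat list \<Rightarrow> 'a::comm_ring_1) set" where
  "tensor_space C n = {x. \<forall>K. K \<notin> valid_idx C n \<longrightarrow> x K = 0}"

text \<open>Componentwise multiplication, extended bilinearly:
  (e_I)(e_J) = (e_(i_1) e_(j_1)) \<otimes> ... \<otimes> (e_(i_n) e_(j_n)).\<close>
definition tmul :: "cd_alg \<Rightarrow> nat \<Rightarrow> (nat list \<Rightarrow> 'a::comm_ring_1) \<Rightarrow> (nat list \<Rightarrow> 'a) \<Rightarrow> nat list \<Rightarrow> 'a" where
  "tmul C n x y = (\<lambda>K. if K \<in> valid_idx C n then
      (\<Sum>I\<in>valid_idx C n. \<Sum>J\<in>valid_idx C n.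
          x I * y J * (\<Prod>k<n. cmul C (bvec (I ! k)) (bvec (J ! k)) (K ! k)))
    else 0)"

definition pure_tensor :: "cd_alg \<Rightarrow> nat \<Rightarrow> (nat \<Rightarrow> 'a::comm_ring_1) list \<Rightarrow> nat list \<Rightarrow> 'a" where
  "pure_tensor C n vs = (\<lambda>K. if K \<in> valid_idx C n then (\<Prod>k<n. (vs ! k) (K ! k)) else 0)"

text \<open>Action of a permutation sigma of {0..n-1}:
  sigma(x_1 \<otimes> ... \<otimes> x_n) = x_(sigma^-1 1) \<otimes> ... \<otimes> x_(sigma^-1 n);
  on coordinates (sigma x)(K) = x(K o sigma).\<close>
definition perm_act :: "cd_alg \<Rightarrow> nat \<Rightarrow> (nat \<Rightarrow> nat) \<Rightarrow> (nat list \<Rightarrow> 'a::comm_ring_1) \<Rightarrow> nat list \<Rightarrow> 'a" where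
  "perm_act C n \<sigma> x = (\<lambda>K. if K \<in> valid_idx C n then x (map (\<lambda>k. K ! \<sigma> k) [0..<n]) else 0)"

definition sym_space :: "cd_alg \<Rightarrow> nat \<Rightarrow> (nat list \<Rightarrow> 'a::comm_ring_1) set" where
  "sym_space C n = {x \<in> tensor_space C n. \<forall>\<sigma>. \<sigma> permutes {..<n} \<longrightarrow> perm_act C n \<sigma> x = x}"

definition symmetrize :: "cd_alg \<Rightarrow> nat \<Rightarrow> (nat list \<Rightarrow> 'a::field_char_0) \<Rightarrow> nat list \<Rightarrow> 'a" where
  "symmetrize C n x = (\<lambda>K. (1 / of_nat (fact n)) *
      (\<Sum>\<sigma>\<in>{\<sigma>. \<sigma> permutes {..<n}}. perm_act C n \<sigma> x K))"

definition delta_one :: "cd_alg \<Rightarrow> nat \<Rightarrow> nat list \<Rightarrow> 'a::field_char_0" where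
  "delta_one C n = (\<lambda>K. (1 / of_nat (dim C)) *
      (\<Sum>i<dim C. pure_tensor C n ([bvec i, bvec i] @ replicate (n - 2) (bvec 0)) K))"

definition delta_n :: "cd_alg \<Rightarrow> nat \<Rightarrow> nat list \<Rightarrow> 'a::field_char_0" where
  "delta_n C n = symmetrize C n (delta_one C n)"

definition comm_assoc :: "cd_alg \<Rightarrow> nat \<Rightarrow> (nat list \<Rightarrow> 'a::comm_ring_1) \<Rightarrow> (nat list \<Rightarrow> 'a)
    \<Rightarrow> (nat list \<Rightarrow> 'a) set \<Rightarrow> bool" where
  "comm_assoc C n z x Y \<longleftrightarrow> tmul C n z x = tmul C n x z \<and>
     (\<forall>y\<in>Y. tmul C n (tmul C n z x) y = tmul C n z (tmul C n x y)
          \<and> tmul C n (tmul C n x z) y = tmul C n x (tmul C n z y)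
          \<and> tmul C n (tmul C n x y) z = tmul C n x (tmul C n y z))"

inductive_set gen_alg :: "cd_alg \<Rightarrow> nat \<Rightarrow> (nat list \<Rightarrow> 'a::comm_ring_1) \<Rightarrow> (nat list \<Rightarrow> 'a) set"
  for C n z where
  gen_one: "pure_tensor C n (replicate n (bvec 0)) \<in> gen_alg C n z"
| gen_base: "z \<in> gen_alg C n z"
| gen_add: "a \<in> gen_alg C n z \<Longrightarrow> b \<in> gen_alg C n z \<Longrightarrow> (\<lambda>K. a K + b K) \<in> gen_alg C n z"
| gen_smult: "a \<in> gen_alg C n z \<Longrightarrow> (\<lambda>K. c * a K) \<in> gen_alg C n z"
| gen_mult: "a \<in> gen_alg C n z \<Longrightarrow> b \<in> gen_alg C n z \<Longrightarrow> tmul C n a b \<in> gen_alg C n z"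

end

theory Submission
  imports Defs
begin

(*
  Write delta_one = (1/d) D with D = sum_i e_i (x) e_i (x) 1 (x) ... (x) 1. Both H and O are
  composition algebras; polarizing |ab|^2 = |a|^2 |b|^2 gives <ac,be> + <ae,bc> = 2 <a,b> <c,e>,
  together with the two variants in which a basis element multiplies from the left (or from the
  right) and is summed over the basis. For tensors y symmetric in their first two factors these
  identities yield D y = y D = sum_i e_i (x) e_i (x) tr y, where tr contracts the first two
  factors, and tr (x y) = tr x tr y. Every element of Sym^n is such a tensor, so each commutation
  or association relation between D and Sym^n reduces to an identity between contractions.
  Permutations act by algebra automorphisms fixing Sym^n pointwise, hence the symmetrization
  delta_n is central as well, and the symmetric tensors that commute and associate with Sym^n
  form a unital subalgebra, which therefore contains F[delta_n].
*)

abbreviation struct_const :: "cd_alg \<Rightarrow> nat \<Rightarrow> nat \<Rightarrow> nat \<Rightarrow> 'a::comm_ring_1" where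
  "struct_const C i j k \<equiv> cmul C (bvec i) (bvec j) k"

abbreviation unit_tensor :: "cd_alg \<Rightarrow> nat \<Rightarrow> nat list \<Rightarrow> 'a::comm_ring_1" where
  "unit_tensor C n \<equiv> pure_tensor C n (replicate n (bvec 0))"

lemma sum_lessThan_4: "(\<Sum>k<4::nat. f k) = f 0 + f 1 + f 2 + (f 3 :: 'a::comm_monoid_add)"
  by (simp add: numeral_eq_Suc add_ac)

lemma sum_lessThan_8:
  "(\<Sum>k<8::nat. f k) = f 0 + f 1 + f 2 + f 3 + f 4 + f 5 + f 6 + (f 7 :: 'a::comm_monoid_add)"
  by (simp add: numeral_eq_Suc add_ac)

lemma prod_of_bool:
  "finite A \<Longrightarrow> (\<Prod>k\<in>A. of_bool (P k)) = (of_bool (\<forall>k\<in>A. P k) :: 'a::comm_semiring_1)"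
  by (induction A rule: finite_induct) auto

lemma sum_symmetric_polarized:
  fixes u G :: "nat \<Rightarrow> nat \<Rightarrow> 'a::{idom,ring_char_0}"
  assumes u: "\<And>a b. a < d \<Longrightarrow> b < d \<Longrightarrow> u a b = u b a"
      and G: "\<And>a b. a < d \<Longrightarrow> b < d \<Longrightarrow> G a b + G b a = 2 * of_bool (a = b) * t"
  shows "(\<Sum>a<d. \<Sum>b<d. u a b * G a b) = t * (\<Sum>a<d. u a a)"
proof -
  let ?S = "\<Sum>a<d. \<Sum>b<d. u a b * G a b"
  have "?S = (\<Sum>a<d. \<Sum>b<d. u a b * G b a)"
    using u by (subst sum.swap) (auto intro!: sum.cong)
  then have "2 * ?S = (\<Sum>a<d. \<Sum>b<d. u a b * (G a b + G b a))"
    by (simp add: distrib_left sum.distrib)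
  also have "\<dots> = (\<Sum>a<d. \<Sum>b<d. of_bool (a = b) * (2 * t * u a b))"
    using G by (auto simp: mult_ac intro!: sum.cong)
  also have "\<dots> = 2 * (t * (\<Sum>a<d. u a a))"
    by (simp add: sum_distrib_left mult.assoc)
  finally show ?thesis by simp
qed

section \<open>Index lists and componentwise multiplication\<close>

lemma dim_pos: "0 < dim C"
  by (cases C) auto

lemma valid_idx_0 [simp]: "valid_idx C 0 = {[]}"
  by (auto simp: valid_idx_def)

lemma Cons_in_valid_idx [simp]: "a # K \<in> valid_idx C (Suc m) \<longleftrightarrow> a < dim C \<and> K \<in> valid_idx C m"
  by (auto simp: valid_idx_def)

lemma Nil_notin_valid_idx_Suc [simp]: "[] \<notin> valid_idx C (Suc m)"
  by (auto simp: valid_idx_def)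

lemma valid_idx_Suc: "valid_idx C (Suc m) = (\<lambda>(a, K). a # K) ` ({..<dim C} \<times> valid_idx C m)"
proof -
  have "K \<in> (\<lambda>(a, K). a # K) ` ({..<dim C} \<times> valid_idx C m)" if "K \<in> valid_idx C (Suc m)" for K
    using that by (cases K) force+
  then show ?thesis by auto
qed

lemma finite_valid_idx [simp]: "finite (valid_idx C m)"
  by (induction m) (auto simp: valid_idx_Suc)

lemma sum_valid_idx_Suc:
  "(\<Sum>K\<in>valid_idx C (Suc m). f K) = (\<Sum>a<dim C. \<Sum>K\<in>valid_idx C m. f (a # K))"
proof -
  have "inj_on (\<lambda>(a, K). a # K) ({..<dim C} \<times> valid_idx C m)"
    by (auto simp: inj_on_def)
  then show ?thesis
    by (simp add: valid_idx_Suc sum.reindex sum.cartesian_product case_prod_unfold)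
qed

lemma valid_idx_Suc_Suc_cases:
  assumes "K \<in> valid_idx C (Suc (Suc m))"
  obtains a b R where "K = a # b # R" "a < dim C" "b < dim C" "R \<in> valid_idx C m"
  using assms by (cases K; cases "tl K") auto

lemma length_valid_idx: "K \<in> valid_idx C n \<Longrightarrow> length K = n"
  by (simp add: valid_idx_def)

lemma nth_valid_idx_less: "K \<in> valid_idx C n \<Longrightarrow> k < n \<Longrightarrow> K ! k < dim C"
  unfolding valid_idx_def using nth_mem by fastforce

lemma replicate_0_in_valid_idx: "replicate n 0 \<in> valid_idx C n"
  using dim_pos[of C] by (simp add: valid_idx_def set_replicate_conv_if)

lemma tmul_outside: "K \<notin> valid_idx C n \<Longrightarrow> tmul C n x y K = 0"
  by (simp add: tmul_def)

lemma tmul_apply: "K \<in> valid_idx C n \<Longrightarrow> tmul C n x y K =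
    (\<Sum>I\<in>valid_idx C n. \<Sum>J\<in>valid_idx C n.
       x I * y J * (\<Prod>k<n. struct_const C (I ! k) (J ! k) (K ! k)))"
  by (simp add: tmul_def)

lemma tmul_in_tensor_space: "tmul C n x y \<in> tensor_space C n"
  by (simp add: tensor_space_def tmul_outside)

lemma tmul_cong:
  assumes "\<And>I. I \<in> valid_idx C n \<Longrightarrow> x I = x' I" "\<And>J. J \<in> valid_idx C n \<Longrightarrow> y J = y' J"
  shows "tmul C n x y = tmul C n x' y'"
  unfolding tmul_def using assms by (auto intro!: sum.cong)

lemma tmul_Cons:
  assumes "c < dim C" "K \<in> valid_idx C m"
  shows "tmul C (Suc m) x y (c # K) =
    (\<Sum>a<dim C. \<Sum>b<dim C. struct_const C a b c * tmul C m (\<lambda>I. x (a # I)) (\<lambda>J. y (b # J)) K)"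
proof -
  have prod_Cons: "(\<Prod>k<Suc m. struct_const C ((a # I) ! k) ((b # J) ! k) ((c # K) ! k)) =
      struct_const C a b c * (\<Prod>k<m. struct_const C (I ! k) (J ! k) (K ! k))" for a b I J
    by (simp only: prod.lessThan_Suc_shift) simp
  have "tmul C (Suc m) x y (c # K) =
     (\<Sum>a<dim C. \<Sum>I\<in>valid_idx C m. \<Sum>b<dim C. \<Sum>J\<in>valid_idx C m.
        struct_const C a b c * (x (a # I) * y (b # J) * (\<Prod>k<m. struct_const C (I ! k) (J ! k) (K ! k))))"
    using assms by (simp del: prod.lessThan_Suc add: tmul_apply sum_valid_idx_Suc prod_Cons mult_ac)
  also have "\<dots> = (\<Sum>a<dim C. \<Sum>b<dim C. \<Sum>I\<in>valid_idx C m. \<Sum>J\<in>valid_idx C m.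
        struct_const C a b c * (x (a # I) * y (b # J) * (\<Prod>k<m. struct_const C (I ! k) (J ! k) (K ! k))))"
    by (intro sum.cong refl sum.swap)
  also have "\<dots> = (\<Sum>a<dim C. \<Sum>b<dim C. struct_const C a b c * tmul C m (\<lambda>I. x (a # I)) (\<lambda>J. y (b # J)) K)"
    using assms by (simp add: tmul_apply sum_distrib_left)
  finally show ?thesis .
qed

lemma tmul_add_left: "tmul C n (\<lambda>I. x I + x' I) y = (\<lambda>K. tmul C n x y K + tmul C n x' y K)"
  by (simp add: tmul_def fun_eq_iff sum.distrib algebra_simps)

lemma tmul_add_right: "tmul C n x (\<lambda>J. y J + y' J) = (\<lambda>K. tmul C n x y K + tmul C n x y' K)"
  by (simp add: tmul_def fun_eq_iff sum.distrib algebra_simps)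

lemma tmul_scale_left: "tmul C n (\<lambda>I. c * x I) y = (\<lambda>K. c * tmul C n x y K)"
  by (simp add: tmul_def fun_eq_iff sum_distrib_left mult.assoc)

lemma tmul_scale_right: "tmul C n x (\<lambda>J. c * y J) = (\<lambda>K. c * tmul C n x y K)"
  by (simp add: tmul_def fun_eq_iff sum_distrib_left algebra_simps)

lemma tmul_zero_left: "tmul C n (\<lambda>I. 0) y = (\<lambda>K. 0)"
  by (simp add: tmul_def fun_eq_iff)

lemma tmul_zero_right: "tmul C n x (\<lambda>J. 0) = (\<lambda>K. 0)"
  by (simp add: tmul_def fun_eq_iff)

lemma tmul_sum_left:
  "finite S \<Longrightarrow> tmul C n (\<lambda>I. \<Sum>s\<in>S. x s I) y = (\<lambda>K. \<Sum>s\<in>S. tmul C n (x s) y K)"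
  by (induction S rule: finite_induct) (simp_all add: tmul_zero_left tmul_add_left)

lemma tmul_sum_right:
  "finite S \<Longrightarrow> tmul C n x (\<lambda>J. \<Sum>s\<in>S. y s J) = (\<lambda>K. \<Sum>s\<in>S. tmul C n x (y s) K)"
  by (induction S rule: finite_induct) (simp_all add: tmul_zero_right tmul_add_right)

section \<open>Structure constants of H and O\<close>

definition cinner :: "cd_alg \<Rightarrow> (nat \<Rightarrow> 'a::comm_ring_1) \<Rightarrow> (nat \<Rightarrow> 'a) \<Rightarrow> 'a" where
  "cinner C u v = (\<Sum>k<dim C. u k * v k)"

lemma cinner_cmul_polarized:
  fixes a b c e :: "nat \<Rightarrow> 'a::idom"
  shows "cinner C (cmul C a c) (cmul C b e) + cinner C (cmul C a e) (cmul C b c)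
       = 2 * cinner C a b * cinner C c e"
proof (cases C)
  case Quat show ?thesis
    unfolding Quat by (simp add: cinner_def sum_lessThan_4 qmul_def) algebra
next
  case Oct show ?thesis
    unfolding Oct
    by (simp add: cinner_def sum_lessThan_8 omul_def qmul_def lo_part_def hi_part_def qconj_def)
      algebra
qed

lemma cinner_left_mult_polarized:
  fixes p q u v :: "nat \<Rightarrow> 'a::idom"
  shows "(\<Sum>i<dim C. cinner C (cmul C (bvec i) p) u * cinner C (cmul C (bvec i) q) v
           + cinner C (cmul C (bvec i) q) u * cinner C (cmul C (bvec i) p) v)
       = 2 * cinner C p q * cinner C u v"
proof (cases C)
  case Quat show ?thesis
    unfolding Quat by (simp add: cinner_def sum_lessThan_4 qmul_def bvec_def) algebra
next
  case Oct show ?thesis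
    unfolding Oct
    by (simp add: cinner_def sum_lessThan_8 omul_def qmul_def lo_part_def hi_part_def qconj_def
        bvec_def) algebra
qed

lemma cinner_right_mult_polarized:
  fixes p q u v :: "nat \<Rightarrow> 'a::idom"
  shows "(\<Sum>i<dim C. cinner C (cmul C p (bvec i)) u * cinner C (cmul C q (bvec i)) v
           + cinner C (cmul C q (bvec i)) u * cinner C (cmul C p (bvec i)) v)
       = 2 * cinner C p q * cinner C u v"
proof (cases C)
  case Quat show ?thesis
    unfolding Quat by (simp add: cinner_def sum_lessThan_4 qmul_def bvec_def) algebra
next
  case Oct show ?thesis
    unfolding Oct
    by (simp add: cinner_def sum_lessThan_8 omul_def qmul_def lo_part_def hi_part_def qconj_def
        bvec_def) algebra
qed

lemma bvec_apply: "bvec j k = of_bool (k = j)"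
  by (simp add: bvec_def)

lemma cinner_bvec_right: "c < dim C \<Longrightarrow> cinner C x (bvec c) = x c"
  by (simp add: cinner_def bvec_def if_distrib cong: if_cong)

lemma cinner_bvec_bvec:
  "k < dim C \<Longrightarrow> cinner C (bvec j) (bvec k) = of_bool (j = k)"
  by (simp add: cinner_bvec_right bvec_apply)

lemma struct_const_left_polarized:
  assumes "j < dim C" "k < dim C" "c < dim C" "e < dim C"
  shows "(\<Sum>a<dim C. struct_const C a j c * struct_const C a k e)
       + (\<Sum>a<dim C. struct_const C a k c * struct_const C a j e)
       = 2 * of_bool (j = k) * (of_bool (c = e) :: 'a::idom)"
  using cinner_left_mult_polarized[where C = C and p = "bvec j :: nat \<Rightarrow> 'a" and q = "bvec k"
      and u = "bvec c" and v = "bvec e"] assms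
  by (simp add: cinner_bvec_right cinner_bvec_bvec sum.distrib bvec_apply)

lemma struct_const_right_polarized:
  assumes "j < dim C" "k < dim C" "c < dim C" "e < dim C"
  shows "(\<Sum>a<dim C. struct_const C j a c * struct_const C k a e)
       + (\<Sum>a<dim C. struct_const C k a c * struct_const C j a e)
       = 2 * of_bool (j = k) * (of_bool (c = e) :: 'a::idom)"
  using cinner_right_mult_polarized[where C = C and p = "bvec j :: nat \<Rightarrow> 'a" and q = "bvec k"
      and u = "bvec c" and v = "bvec e"] assms
  by (simp add: cinner_bvec_right cinner_bvec_bvec sum.distrib bvec_apply)

lemma struct_const_polarized:
  assumes "a < dim C" "b < dim C" "c < dim C" "e < dim C"
  shows "(\<Sum>k<dim C. struct_const C a c k * struct_const C b e k)
       + (\<Sum>k<dim C. struct_const C a e k * struct_const C b c k)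
       = 2 * of_bool (a = b) * (of_bool (c = e) :: 'a::idom)"
  unfolding cinner_def[symmetric]
  using cinner_cmul_polarized[where C = C and a = "bvec a :: nat \<Rightarrow> 'a" and b = "bvec b"
      and c = "bvec c" and e = "bvec e"] assms
  by (simp add: cinner_bvec_bvec)

lemma cmul_unit_left: "cmul C (bvec 0) x k = (if k < dim C then x k else 0)"
  by (cases C) (auto simp: omul_def qmul_def lo_part_def hi_part_def qconj_def bvec_def
      less_Suc_eq numeral_eq_Suc)

lemma cmul_unit_right: "cmul C x (bvec 0) k = (if k < dim C then x k else 0)"
  by (cases C) (auto simp: omul_def qmul_def lo_part_def hi_part_def qconj_def bvec_def
      less_Suc_eq numeral_eq_Suc)

lemma pure_tensor_Cons:
  assumes "a < dim C" "K \<in> valid_idx C m"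
  shows "pure_tensor C (Suc m) (v # vs) (a # K) = v a * pure_tensor C m vs K"
proof -
  have "(\<Prod>k<Suc m. ((v # vs) ! k) ((a # K) ! k)) = v a * (\<Prod>k<m. (vs ! k) (K ! k))"
    by (simp only: prod.lessThan_Suc_shift) simp
  with assms show ?thesis
    by (simp add: pure_tensor_def)
qed

lemma unit_tensor_apply:
  "K \<in> valid_idx C n \<Longrightarrow> unit_tensor C n K = of_bool (K = replicate n 0)"
  by (auto simp: pure_tensor_def valid_idx_def bvec_apply prod_of_bool list_eq_iff_nth_eq)

lemma prod_struct_const_unit_left:
  assumes "J \<in> valid_idx C n" "K \<in> valid_idx C n"
  shows "(\<Prod>k<n. struct_const C 0 (J ! k) (K ! k)) = of_bool (J = K)"
proof -
  have "(\<Prod>k<n. struct_const C 0 (J ! k) (K ! k)) = (\<Prod>k<n. of_bool (J ! k = K ! k))"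
    using assms by (intro prod.cong) (auto simp: cmul_unit_left bvec_apply nth_valid_idx_less)
  also have "\<dots> = of_bool (J = K)"
    using assms by (auto simp: prod_of_bool list_eq_iff_nth_eq valid_idx_def)
  finally show ?thesis .
qed

lemma prod_struct_const_unit_right:
  assumes "I \<in> valid_idx C n" "K \<in> valid_idx C n"
  shows "(\<Prod>k<n. struct_const C (I ! k) 0 (K ! k)) = of_bool (I = K)"
proof -
  have "(\<Prod>k<n. struct_const C (I ! k) 0 (K ! k)) = (\<Prod>k<n. of_bool (I ! k = K ! k))"
    using assms by (intro prod.cong) (auto simp: cmul_unit_right bvec_apply nth_valid_idx_less)
  also have "\<dots> = of_bool (I = K)"
    using assms by (auto simp: prod_of_bool list_eq_iff_nth_eq valid_idx_def)
  finally show ?thesis .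
qed

lemma tmul_unit_left:
  assumes "y \<in> tensor_space C n"
  shows "tmul C n (unit_tensor C n) y = y"
proof
  fix K
  show "tmul C n (unit_tensor C n) y K = y K"
  proof (cases "K \<in> valid_idx C n")
    case True
    have "tmul C n (unit_tensor C n) y K = (\<Sum>J\<in>valid_idx C n. \<Sum>I\<in>valid_idx C n.
        of_bool (I = replicate n 0) * (y J * (\<Prod>k<n. struct_const C (I ! k) (J ! k) (K ! k))))"
      using True by (subst sum.swap) (simp add: tmul_apply unit_tensor_apply mult_ac)
    also have "\<dots> = (\<Sum>J\<in>valid_idx C n. y J * of_bool (J = K))"
      using True by (simp add: replicate_0_in_valid_idx prod_struct_const_unit_left)
    finally show ?thesis
      using True by simp
  qed (use assms in \<open>simp add: tmul_outside tensor_space_def\<close>)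
qed

lemma tmul_unit_right:
  assumes "x \<in> tensor_space C n"
  shows "tmul C n x (unit_tensor C n) = x"
proof
  fix K
  show "tmul C n x (unit_tensor C n) K = x K"
  proof (cases "K \<in> valid_idx C n")
    case True
    have "tmul C n x (unit_tensor C n) K = (\<Sum>I\<in>valid_idx C n. \<Sum>J\<in>valid_idx C n.
        of_bool (J = replicate n 0) * (x I * (\<Prod>k<n. struct_const C (I ! k) (J ! k) (K ! k))))"
      using True by (simp add: tmul_apply unit_tensor_apply mult_ac)
    also have "\<dots> = (\<Sum>I\<in>valid_idx C n. x I * of_bool (I = K))"
      using True by (simp add: replicate_0_in_valid_idx prod_struct_const_unit_right)
    finally show ?thesis
      using True by simp
  qed (use assms in \<open>simp add: tmul_outside tensor_space_def\<close>)
qed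

section \<open>Symmetric tensors\<close>

lemma perm_act_apply: "K \<in> valid_idx C n \<Longrightarrow> perm_act C n \<sigma> x K = x (permute_list \<sigma> K)"
  by (simp add: perm_act_def permute_list_def length_valid_idx)

lemma perm_act_outside: "K \<notin> valid_idx C n \<Longrightarrow> perm_act C n \<sigma> x K = 0"
  by (simp add: perm_act_def)

lemma permute_list_in_valid_idx:
  "\<sigma> permutes {..<n} \<Longrightarrow> K \<in> valid_idx C n \<Longrightarrow> permute_list \<sigma> K \<in> valid_idx C n"
  by (simp add: valid_idx_def)

lemma bij_betw_permute_list_valid_idx:
  assumes "\<sigma> permutes {..<n}"
  shows "bij_betw (permute_list \<sigma>) (valid_idx C n) (valid_idx C n)"
proof (rule bij_betw_byWitness[where f' = "permute_list (inv \<sigma>)"])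
  have inv: "inv \<sigma> permutes {..<n}"
    using assms by (rule permutes_inv)
  show "\<forall>K\<in>valid_idx C n. permute_list (inv \<sigma>) (permute_list \<sigma> K) = K"
    using inv by (auto simp: valid_idx_def permute_list_compose[symmetric] permutes_inv_o[OF assms])
  show "\<forall>K\<in>valid_idx C n. permute_list \<sigma> (permute_list (inv \<sigma>) K) = K"
    using assms by (auto simp: valid_idx_def permute_list_compose[symmetric] permutes_inv_o[OF assms])
  show "permute_list \<sigma> ` valid_idx C n \<subseteq> valid_idx C n"
    using assms by (auto intro: permute_list_in_valid_idx)
  show "permute_list (inv \<sigma>) ` valid_idx C n \<subseteq> valid_idx C n"
    using inv by (auto intro: permute_list_in_valid_idx)
qed

lemma prod_permute_list:
  assumes "\<sigma> permutes {..<n}" "length I = n" "length J = n" "length K = n"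
  shows "(\<Prod>k<n. struct_const C (permute_list \<sigma> I ! k) (permute_list \<sigma> J ! k) (permute_list \<sigma> K ! k))
       = (\<Prod>k<n. struct_const C (I ! k) (J ! k) (K ! k))"
  using assms prod.permute[OF assms(1), of "\<lambda>k. struct_const C (I ! k) (J ! k) (K ! k)", symmetric]
  by (simp add: permute_list_nth)

lemma perm_act_tmul:
  assumes "\<sigma> permutes {..<n}"
  shows "perm_act C n \<sigma> (tmul C n x y) = tmul C n (perm_act C n \<sigma> x) (perm_act C n \<sigma> y)"
proof
  fix K
  show "perm_act C n \<sigma> (tmul C n x y) K = tmul C n (perm_act C n \<sigma> x) (perm_act C n \<sigma> y) K"
  proof (cases "K \<in> valid_idx C n")
    case True
    let ?V = "valid_idx C n" and ?p = "permute_list \<sigma>"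
    let ?P = "\<lambda>I J K. \<Prod>k<n. struct_const C (I ! k) (J ! k) (K ! k)"
    have bij: "bij_betw ?p ?V ?V"
      using assms by (rule bij_betw_permute_list_valid_idx)
    have "tmul C n (perm_act C n \<sigma> x) (perm_act C n \<sigma> y) K =
        (\<Sum>I\<in>?V. \<Sum>J\<in>?V. x (?p I) * y (?p J) * ?P (?p I) (?p J) (?p K))"
      using True assms by (simp add: tmul_apply perm_act_apply prod_permute_list length_valid_idx)
    also have "\<dots> = (\<Sum>I\<in>?V. \<Sum>J\<in>?V. x I * y J * ?P I J (?p K))"
      by (subst sum.reindex_bij_betw[OF bij], subst sum.reindex_bij_betw[OF bij]) (rule refl)
    also have "\<dots> = perm_act C n \<sigma> (tmul C n x y) K"
      using True assms by (simp add: tmul_apply perm_act_apply permute_list_in_valid_idx)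
    finally show ?thesis ..
  qed (simp add: perm_act_outside tmul_outside)
qed

lemma perm_act_perm_act:
  assumes "\<sigma> permutes {..<n}" "\<tau> permutes {..<n}"
  shows "perm_act C n \<sigma> (perm_act C n \<tau> x) = perm_act C n (\<sigma> \<circ> \<tau>) x"
proof
  fix K
  show "perm_act C n \<sigma> (perm_act C n \<tau> x) K = perm_act C n (\<sigma> \<circ> \<tau>) x K"
    using assms
    by (cases "K \<in> valid_idx C n")
      (simp_all add: perm_act_apply perm_act_outside permute_list_in_valid_idx
        permute_list_compose length_valid_idx)
qed

lemma perm_act_add:
  "perm_act C n \<sigma> (\<lambda>K. x K + y K) = (\<lambda>K. perm_act C n \<sigma> x K + perm_act C n \<sigma> y K)"
  by (simp add: perm_act_def fun_eq_iff)

lemma perm_act_scale: "perm_act C n \<sigma> (\<lambda>K. c * x K) = (\<lambda>K. c * perm_act C n \<sigma> x K)"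
  by (simp add: perm_act_def fun_eq_iff)

lemma sym_space_imp_tensor_space: "x \<in> sym_space C n \<Longrightarrow> x \<in> tensor_space C n"
  by (simp add: sym_space_def)

lemma sym_space_tmul:
  "x \<in> sym_space C n \<Longrightarrow> y \<in> sym_space C n \<Longrightarrow> tmul C n x y \<in> sym_space C n"
  by (simp add: sym_space_def tmul_in_tensor_space perm_act_tmul)

lemma sym_space_add:
  "x \<in> sym_space C n \<Longrightarrow> y \<in> sym_space C n \<Longrightarrow> (\<lambda>K. x K + y K) \<in> sym_space C n"
  by (simp add: sym_space_def tensor_space_def perm_act_add)

lemma sym_space_scale: "x \<in> sym_space C n \<Longrightarrow> (\<lambda>K. c * x K) \<in> sym_space C n"
  by (simp add: sym_space_def tensor_space_def perm_act_scale)

lemma pure_tensor_replicate_in_sym_space: "pure_tensor C n (replicate n v) \<in> sym_space C n"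
proof -
  have "perm_act C n \<sigma> (pure_tensor C n (replicate n v)) K = pure_tensor C n (replicate n v) K"
    if "\<sigma> permutes {..<n}" for \<sigma> K
    using that prod.permute[OF that, of "\<lambda>k. v (K ! k)"]
    by (cases "K \<in> valid_idx C n")
      (simp_all add: perm_act_apply perm_act_outside pure_tensor_def permute_list_in_valid_idx
        permute_list_nth length_valid_idx)
  then show ?thesis
    by (simp add: sym_space_def tensor_space_def pure_tensor_def fun_eq_iff)
qed

lemma symmetrize_in_sym_space: "symmetrize C n x \<in> sym_space C n"
proof -
  let ?S = "{\<sigma>. \<sigma> permutes {..<n}}"
  have "perm_act C n \<tau> (symmetrize C n x) K = symmetrize C n x K" if \<tau>: "\<tau> permutes {..<n}" for \<tau> K
  proof (cases "K \<in> valid_idx C n")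
    case True
    have "perm_act C n \<tau> (symmetrize C n x) K
        = 1 / of_nat (fact n) * (\<Sum>\<sigma>\<in>?S. perm_act C n (\<tau> \<circ> \<sigma>) x K)"
      using True \<tau> by (simp add: symmetrize_def perm_act_apply perm_act_perm_act[symmetric])
    also have "\<dots> = symmetrize C n x K"
      unfolding symmetrize_def
      using setum_permutations_compose_left[OF \<tau>, of "\<lambda>\<sigma>. perm_act C n \<sigma> x K"] by simp
    finally show ?thesis .
  qed (simp add: perm_act_outside symmetrize_def)
  moreover have "symmetrize C n x \<in> tensor_space C n"
    by (simp add: tensor_space_def symmetrize_def perm_act_outside)
  ultimately show ?thesis
    by (simp add: sym_space_def fun_eq_iff)
qed

section \<open>Contraction of the first two factors\<close>

definition symmetric12 :: "(nat list \<Rightarrow> 'a) \<Rightarrow> bool" where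
  "symmetric12 x \<longleftrightarrow> (\<forall>a b R. x (a # b # R) = x (b # a # R))"

lemma sym_space_symmetric12:
  assumes "x \<in> sym_space C (Suc (Suc m))"
  shows "symmetric12 x"
  unfolding symmetric12_def
proof (intro allI)
  fix a b R
  let ?t = "transpose (0::nat) 1"
  have t: "?t permutes {..<Suc (Suc m)}"
    by (rule permutes_swap_id) auto
  have x: "x \<in> tensor_space C (Suc (Suc m))" "perm_act C (Suc (Suc m)) ?t x = x"
    using assms t by (auto simp: sym_space_def)
  show "x (a # b # R) = x (b # a # R)"
  proof (cases "a # b # R \<in> valid_idx C (Suc (Suc m))")
    case True
    then have "?t permutes {..<length (a # b # R)}"
      using t length_valid_idx[of R C m] by simp
    then have "permute_list ?t (a # b # R) = b # a # R"
      by (auto simp: list_eq_iff_nth_eq permute_list_nth nth_Cons' transpose_def)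
    then show ?thesis
      using x(2) True by (metis perm_act_apply)
  next
    case False
    then have "b # a # R \<notin> valid_idx C (Suc (Suc m))"
      by auto
    with False x(1) show ?thesis
      by (simp add: tensor_space_def)
  qed
qed

definition contract12 :: "cd_alg \<Rightarrow> (nat list \<Rightarrow> 'a::comm_ring_1) \<Rightarrow> nat list \<Rightarrow> 'a" where
  "contract12 C x = (\<lambda>R. \<Sum>a<dim C. x (a # a # R))"

definition diag12 :: "cd_alg \<Rightarrow> nat \<Rightarrow> (nat list \<Rightarrow> 'a::comm_ring_1) \<Rightarrow> nat list \<Rightarrow> 'a" where
  "diag12 C m w = (\<lambda>K. if K \<in> valid_idx C (Suc (Suc m)) \<and> K ! 0 = K ! 1 then w (drop 2 K) else 0)"

lemma contract12_in_tensor_space: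
  "x \<in> tensor_space C (Suc (Suc m)) \<Longrightarrow> contract12 C x \<in> tensor_space C m"
  by (simp add: tensor_space_def contract12_def)

lemma diag12_Cons_Cons:
  "a < dim C \<Longrightarrow> b < dim C \<Longrightarrow> R \<in> valid_idx C m \<Longrightarrow> diag12 C m w (a # b # R) = of_bool (a = b) * w R"
  by (simp add: diag12_def)

lemma diag12_outside: "K \<notin> valid_idx C (Suc (Suc m)) \<Longrightarrow> diag12 C m w K = 0"
  by (simp add: diag12_def)

lemma tmul_Cons_Cons:
  assumes "c < dim C" "e < dim C" "S \<in> valid_idx C m"
  shows "tmul C (Suc (Suc m)) x y (c # e # S) =
    (\<Sum>a<dim C. \<Sum>b<dim C. \<Sum>a'<dim C. \<Sum>b'<dim C. struct_const C a a' c * struct_const C b b' e *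
       tmul C m (\<lambda>I. x (a # b # I)) (\<lambda>J. y (a' # b' # J)) S)"
proof -
  have "tmul C (Suc (Suc m)) x y (c # e # S) =
    (\<Sum>a<dim C. \<Sum>a'<dim C. \<Sum>b<dim C. \<Sum>b'<dim C. struct_const C a a' c * struct_const C b b' e *
       tmul C m (\<lambda>I. x (a # b # I)) (\<lambda>J. y (a' # b' # J)) S)"
    using assms by (simp add: tmul_Cons sum_distrib_left mult.assoc)
  also have "\<dots> = (\<Sum>a<dim C. \<Sum>b<dim C. \<Sum>a'<dim C. \<Sum>b'<dim C.
      struct_const C a a' c * struct_const C b b' e * tmul C m (\<lambda>I. x (a # b # I)) (\<lambda>J. y (a' # b' # J)) S)"
    by (rule sum.cong[OF refl], rule sum.swap)
  finally show ?thesis .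
qed

lemma tmul_diag12_left:
  fixes y :: "nat list \<Rightarrow> 'a::{idom,ring_char_0}"
  assumes "symmetric12 y"
  shows "tmul C (Suc (Suc m)) (diag12 C m w) y = diag12 C m (tmul C m w (contract12 C y))"
proof
  fix K
  show "tmul C (Suc (Suc m)) (diag12 C m w) y K = diag12 C m (tmul C m w (contract12 C y)) K"
  proof (cases "K \<in> valid_idx C (Suc (Suc m))")
    case True
    then obtain c e S where K: "K = c # e # S" "c < dim C" "e < dim C" "S \<in> valid_idx C m"
      by (rule valid_idx_Suc_Suc_cases)
    define d where "d = dim C"
    define T where "T a' b' = tmul C m w (\<lambda>J. y (a' # b' # J)) S" for a' b'
    have slice: "tmul C m (\<lambda>I. diag12 C m w (a # b # I)) (\<lambda>J. y (a' # b' # J)) S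
        = of_bool (a = b) * T a' b'" if "a < d" "b < d" for a b a' b'
    proof -
      have "tmul C m (\<lambda>I. diag12 C m w (a # b # I)) (\<lambda>J. y (a' # b' # J))
          = tmul C m (\<lambda>I. of_bool (a = b) * w I) (\<lambda>J. y (a' # b' # J))"
        using that by (intro tmul_cong) (simp_all add: diag12_Cons_Cons d_def)
      then show ?thesis
        by (simp add: tmul_scale_left T_def)
    qed
    have "tmul C (Suc (Suc m)) (diag12 C m w) y K = (\<Sum>a<d. \<Sum>b<d. of_bool (a = b) *
        (\<Sum>a'<d. \<Sum>b'<d. struct_const C a a' c * struct_const C b b' e * T a' b'))"
      using K by (simp add: tmul_Cons_Cons slice sum_distrib_left mult_ac d_def)
    also have "\<dots> = (\<Sum>a<d. \<Sum>a'<d. \<Sum>b'<d. struct_const C a a' c * struct_const C a b' e * T a' b')"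
      by simp
    also have "\<dots> = (\<Sum>a'<d. \<Sum>b'<d. T a' b' * (\<Sum>a<d. struct_const C a a' c * struct_const C a b' e))"
      by (simp add: sum_distrib_left mult_ac) (subst sum.swap, rule sum.cong[OF refl], rule sum.swap)
    also have "\<dots> = of_bool (c = e) * (\<Sum>a'<d. T a' a')"
    proof (rule sum_symmetric_polarized)
      show "T a' b' = T b' a'" for a' b'
        using assms by (simp add: T_def symmetric12_def)
      show "(\<Sum>a<d. struct_const C a a' c * struct_const C a b' e)
          + (\<Sum>a<d. struct_const C a b' c * struct_const C a a' e) = 2 * of_bool (a' = b') * (of_bool (c = e) :: 'a)"
        if "a' < d" "b' < d" for a' b'
        using that K by (simp add: struct_const_left_polarized d_def)
    qed
    also have "\<dots> = diag12 C m (tmul C m w (contract12 C y)) K"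
      using K by (simp add: diag12_Cons_Cons contract12_def tmul_sum_right T_def d_def)
    finally show ?thesis .
  qed (simp add: tmul_outside diag12_outside)
qed

lemma tmul_diag12_right:
  fixes y :: "nat list \<Rightarrow> 'a::{idom,ring_char_0}"
  assumes "symmetric12 y"
  shows "tmul C (Suc (Suc m)) y (diag12 C m w) = diag12 C m (tmul C m (contract12 C y) w)"
proof
  fix K
  show "tmul C (Suc (Suc m)) y (diag12 C m w) K = diag12 C m (tmul C m (contract12 C y) w) K"
  proof (cases "K \<in> valid_idx C (Suc (Suc m))")
    case True
    then obtain c e S where K: "K = c # e # S" "c < dim C" "e < dim C" "S \<in> valid_idx C m"
      by (rule valid_idx_Suc_Suc_cases)
    define d where "d = dim C"
    define T where "T a b = tmul C m (\<lambda>I. y (a # b # I)) w S" for a b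
    have slice: "tmul C m (\<lambda>I. y (a # b # I)) (\<lambda>J. diag12 C m w (a' # b' # J)) S
        = T a b * of_bool (a' = b')" if "a' < d" "b' < d" for a b a' b'
    proof -
      have "tmul C m (\<lambda>I. y (a # b # I)) (\<lambda>J. diag12 C m w (a' # b' # J))
          = tmul C m (\<lambda>I. y (a # b # I)) (\<lambda>J. of_bool (a' = b') * w J)"
        using that by (intro tmul_cong) (simp_all add: diag12_Cons_Cons d_def)
      then show ?thesis
        by (simp add: tmul_scale_right T_def)
    qed
    have "tmul C (Suc (Suc m)) y (diag12 C m w) K =
        (\<Sum>a<d. \<Sum>b<d. \<Sum>a'<d. struct_const C a a' c * struct_const C b a' e * T a b)"
      using K by (simp add: tmul_Cons_Cons slice mult.assoc[symmetric] d_def)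
    also have "\<dots> = (\<Sum>a<d. \<Sum>b<d. T a b * (\<Sum>a'<d. struct_const C a a' c * struct_const C b a' e))"
      by (simp add: sum_distrib_left mult_ac)
    also have "\<dots> = of_bool (c = e) * (\<Sum>a<d. T a a)"
    proof (rule sum_symmetric_polarized)
      show "T a b = T b a" for a b
        using assms by (simp add: T_def symmetric12_def)
      show "(\<Sum>a'<d. struct_const C a a' c * struct_const C b a' e)
          + (\<Sum>a'<d. struct_const C b a' c * struct_const C a a' e) = 2 * of_bool (a = b) * (of_bool (c = e) :: 'a)"
        if "a < d" "b < d" for a b
        using that K by (simp add: struct_const_right_polarized d_def)
    qed
    also have "\<dots> = diag12 C m (tmul C m (contract12 C y) w) K"
      using K by (simp add: diag12_Cons_Cons contract12_def tmul_sum_left T_def d_def)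
    finally show ?thesis .
  qed (simp add: tmul_outside diag12_outside)
qed

lemma contract12_tmul:
  fixes x y :: "nat list \<Rightarrow> 'a::{idom,ring_char_0}"
  assumes "symmetric12 y"
  shows "contract12 C (tmul C (Suc (Suc m)) x y) = tmul C m (contract12 C x) (contract12 C y)"
proof
  fix R
  show "contract12 C (tmul C (Suc (Suc m)) x y) R = tmul C m (contract12 C x) (contract12 C y) R"
  proof (cases "R \<in> valid_idx C m")
    case True
    define d where "d = dim C"
    define X where "X a b a' b' = tmul C m (\<lambda>I. x (a # b # I)) (\<lambda>J. y (a' # b' # J)) R" for a b a' b'
    have "contract12 C (tmul C (Suc (Suc m)) x y) R = (\<Sum>c<d. \<Sum>a<d. \<Sum>b<d. \<Sum>a'<d. \<Sum>b'<d.
        X a b a' b' * (struct_const C a a' c * struct_const C b b' c))"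
      using True by (simp add: contract12_def tmul_Cons_Cons X_def d_def mult_ac)
    also have "\<dots> = (\<Sum>a<d. \<Sum>b<d. \<Sum>a'<d. \<Sum>b'<d. \<Sum>c<d.
        X a b a' b' * (struct_const C a a' c * struct_const C b b' c))"
      by (subst sum.swap, rule sum.cong[OF refl], subst sum.swap, rule sum.cong[OF refl],
          subst sum.swap, rule sum.cong[OF refl], rule sum.swap)
    also have "\<dots> = (\<Sum>a<d. \<Sum>b<d. of_bool (a = b) * (\<Sum>a'<d. X a b a' a'))"
    proof (intro sum.cong refl)
      fix a b
      assume ab: "a \<in> {..<d}" "b \<in> {..<d}"
      have "(\<Sum>a'<d. \<Sum>b'<d. X a b a' b' * (\<Sum>c<d. struct_const C a a' c * struct_const C b b' c))
          = of_bool (a = b) * (\<Sum>a'<d. X a b a' a')"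
      proof (rule sum_symmetric_polarized)
        show "X a b a' b' = X a b b' a'" for a' b'
          using assms by (simp add: X_def symmetric12_def)
        show "(\<Sum>c<d. struct_const C a a' c * struct_const C b b' c)
            + (\<Sum>c<d. struct_const C a b' c * struct_const C b a' c) = 2 * of_bool (a' = b') * (of_bool (a = b) :: 'a)"
          if "a' < d" "b' < d" for a' b'
          using that ab by (simp add: struct_const_polarized d_def mult_ac)
      qed
      then show "(\<Sum>a'<d. \<Sum>b'<d. \<Sum>c<d. X a b a' b' * (struct_const C a a' c * struct_const C b b' c))
          = of_bool (a = b) * (\<Sum>a'<d. X a b a' a')"
        by (simp add: sum_distrib_left)
    qed
    also have "\<dots> = tmul C m (contract12 C x) (contract12 C y) R"
      by (simp add: contract12_def tmul_sum_left tmul_sum_right X_def d_def)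
    finally show ?thesis .
  qed (simp add: contract12_def tmul_outside)
qed

section \<open>The centre of Sym^n\<close>

definition sym_central :: "cd_alg \<Rightarrow> nat \<Rightarrow> (nat list \<Rightarrow> 'a::comm_ring_1) \<Rightarrow> bool" where
  "sym_central C n z \<longleftrightarrow> (\<forall>x\<in>sym_space C n. comm_assoc C n z x (sym_space C n))"

definition sym_center :: "cd_alg \<Rightarrow> nat \<Rightarrow> (nat list \<Rightarrow> 'a::comm_ring_1) set" where
  "sym_center C n = {z \<in> sym_space C n. sym_central C n z}"

lemma sym_central_diag12_unit:
  "sym_central C (Suc (Suc m)) (diag12 C m (unit_tensor C m) :: nat list \<Rightarrow> 'a::{idom,ring_char_0})"
  unfolding sym_central_def comm_assoc_def
proof (intro ballI conjI)
  let ?n = "Suc (Suc m)" and ?D = "diag12 C m (unit_tensor C m) :: nat list \<Rightarrow> 'a"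
  have D: "tmul C ?n ?D z = diag12 C m (contract12 C z)" "tmul C ?n z ?D = diag12 C m (contract12 C z)"
    if "z \<in> sym_space C ?n" for z
    using that by (simp_all add: tmul_diag12_left tmul_diag12_right sym_space_symmetric12
        tmul_unit_left tmul_unit_right contract12_in_tensor_space sym_space_def)
  fix x :: "nat list \<Rightarrow> 'a"
  assume x: "x \<in> sym_space C ?n"
  show "tmul C ?n ?D x = tmul C ?n x ?D"
    using x by (simp add: D)
  fix y :: "nat list \<Rightarrow> 'a"
  assume y: "y \<in> sym_space C ?n"
  have xy: "tmul C ?n x y \<in> sym_space C ?n"
    using x y by (rule sym_space_tmul)
  have "contract12 C (tmul C ?n x y) = tmul C m (contract12 C x) (contract12 C y)"
    using y by (simp add: contract12_tmul sym_space_symmetric12)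
  with x y xy show "tmul C ?n (tmul C ?n ?D x) y = tmul C ?n ?D (tmul C ?n x y)"
    and "tmul C ?n (tmul C ?n x ?D) y = tmul C ?n x (tmul C ?n ?D y)"
    and "tmul C ?n (tmul C ?n x y) ?D = tmul C ?n x (tmul C ?n y ?D)"
    by (simp_all add: D tmul_diag12_left tmul_diag12_right sym_space_symmetric12 tmul_unit_left
        tmul_unit_right tmul_in_tensor_space contract12_in_tensor_space sym_space_imp_tensor_space)
qed

lemma sym_central_zero: "sym_central C n (\<lambda>K. 0)"
  by (simp add: sym_central_def comm_assoc_def tmul_zero_left tmul_zero_right)

lemma sym_central_add:
  "sym_central C n z \<Longrightarrow> sym_central C n z' \<Longrightarrow> sym_central C n (\<lambda>K. z K + z' K)"
  by (auto simp: sym_central_def comm_assoc_def tmul_add_left tmul_add_right sym_space_tmul)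

lemma sym_central_scale: "sym_central C n z \<Longrightarrow> sym_central C n (\<lambda>K. c * z K)"
  by (auto simp: sym_central_def comm_assoc_def tmul_scale_left tmul_scale_right sym_space_tmul)

lemma sym_central_sum:
  "finite S \<Longrightarrow> (\<And>s. s \<in> S \<Longrightarrow> sym_central C n (z s)) \<Longrightarrow> sym_central C n (\<lambda>K. \<Sum>s\<in>S. z s K)"
  by (induction S rule: finite_induct) (simp_all add: sym_central_zero sym_central_add)

lemma sym_central_perm_act:
  fixes z :: "nat list \<Rightarrow> 'a::comm_ring_1"
  assumes \<sigma>: "\<sigma> permutes {..<n}" and z: "sym_central C n z"
  shows "sym_central C n (perm_act C n \<sigma> z)"
  unfolding sym_central_def comm_assoc_def
proof (intro ballI conjI)
  have push: "tmul C n (perm_act C n \<sigma> v) u = perm_act C n \<sigma> (tmul C n v u)"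
    "tmul C n u (perm_act C n \<sigma> v) = perm_act C n \<sigma> (tmul C n u v)"
    if "u \<in> sym_space C n" for u v
    using that \<sigma> by (simp_all add: perm_act_tmul sym_space_def)
  fix x :: "nat list \<Rightarrow> 'a"
  assume x: "x \<in> sym_space C n"
  have zx: "comm_assoc C n z x (sym_space C n)"
    using z x by (simp add: sym_central_def)
  then show "tmul C n (perm_act C n \<sigma> z) x = tmul C n x (perm_act C n \<sigma> z)"
    using x by (simp add: push comm_assoc_def)
  fix y :: "nat list \<Rightarrow> 'a"
  assume y: "y \<in> sym_space C n"
  have "tmul C n (tmul C n z x) y = tmul C n z (tmul C n x y)"
    "tmul C n (tmul C n x z) y = tmul C n x (tmul C n z y)"
    "tmul C n (tmul C n x y) z = tmul C n x (tmul C n y z)"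
    using zx y unfolding comm_assoc_def by blast+
  with x y show "tmul C n (tmul C n (perm_act C n \<sigma> z) x) y = tmul C n (perm_act C n \<sigma> z) (tmul C n x y)"
    and "tmul C n (tmul C n x (perm_act C n \<sigma> z)) y = tmul C n x (tmul C n (perm_act C n \<sigma> z) y)"
    and "tmul C n (tmul C n x y) (perm_act C n \<sigma> z) = tmul C n x (tmul C n y (perm_act C n \<sigma> z))"
    by (simp_all add: push sym_space_tmul)
qed

lemma sym_central_unit: "sym_central C n (unit_tensor C n)"
  by (auto simp: sym_central_def comm_assoc_def tmul_unit_left tmul_unit_right
      tmul_in_tensor_space sym_space_def)

lemma sym_central_commute:
  "sym_central C n a \<Longrightarrow> u \<in> sym_space C n \<Longrightarrow> tmul C n a u = tmul C n u a"
  by (simp add: sym_central_def comm_assoc_def)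

lemma sym_central_assoc:
  assumes "sym_central C n a" "u \<in> sym_space C n" "v \<in> sym_space C n"
  shows "tmul C n (tmul C n a u) v = tmul C n a (tmul C n u v)"
    and "tmul C n (tmul C n u a) v = tmul C n u (tmul C n a v)"
    and "tmul C n (tmul C n u v) a = tmul C n u (tmul C n v a)"
  using assms unfolding sym_central_def comm_assoc_def by blast+

lemma sym_central_tmul:
  fixes a b :: "nat list \<Rightarrow> 'a::comm_ring_1"
  assumes a: "a \<in> sym_space C n" "sym_central C n a" and b: "b \<in> sym_space C n" "sym_central C n b"
  shows "sym_central C n (tmul C n a b)"
  unfolding sym_central_def comm_assoc_def
proof (intro ballI conjI)
  let ?S = "sym_space C n" and ?m = "tmul C n"
  note aC = sym_central_commute[OF a(2)] and bC = sym_central_commute[OF b(2)]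
  note aA = sym_central_assoc[OF a(2)] and bA = sym_central_assoc[OF b(2)]
  note S = sym_space_tmul[of _ C n]
  fix x :: "nat list \<Rightarrow> 'a"
  assume x: "x \<in> ?S"
  have "?m (?m a b) x = ?m a (?m x b)"
    using aA(1)[OF b(1) x] bC[OF x] by simp
  also have "\<dots> = ?m (?m x a) b"
    using aA(1)[OF x b(1)] aC[OF x] by simp
  also have "\<dots> = ?m x (?m a b)"
    using aA(2)[OF x b(1)] .
  finally show "?m (?m a b) x = ?m x (?m a b)" .
  fix y :: "nat list \<Rightarrow> 'a"
  assume y: "y \<in> ?S"
  have "?m (?m (?m a b) x) y = ?m a (?m (?m b x) y)"
    using aA(1)[OF b(1) x] aA(1)[OF S[OF b(1) x] y] by simp
  also have "\<dots> = ?m (?m a b) (?m x y)"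
    using bA(1)[OF x y] aA(1)[OF b(1) S[OF x y]] by simp
  finally show "?m (?m (?m a b) x) y = ?m (?m a b) (?m x y)" .
  have "?m (?m x (?m a b)) y = ?m x (?m a (?m b y))"
    using aA(2)[OF x b(1)] bA(2)[OF S[OF x a(1)] y] aA(2)[OF x S[OF b(1) y]] by simp
  also have "\<dots> = ?m x (?m (?m a b) y)"
    using aA(1)[OF b(1) y] by simp
  finally show "?m (?m x (?m a b)) y = ?m x (?m (?m a b) y)" .
  have "?m (?m x y) (?m a b) = ?m (?m x (?m y a)) b"
    using aA(2)[OF S[OF x y] b(1)] aA(3)[OF x y] by simp
  also have "\<dots> = ?m x (?m y (?m a b))"
    using bA(3)[OF x S[OF y a(1)]] aA(2)[OF y b(1)] by simp
  finally show "?m (?m x y) (?m a b) = ?m x (?m y (?m a b))" .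
qed

lemma sym_center_tmul:
  "a \<in> sym_center C n \<Longrightarrow> b \<in> sym_center C n \<Longrightarrow> tmul C n a b \<in> sym_center C n"
  by (simp add: sym_center_def sym_space_tmul sym_central_tmul)

lemma sym_center_add:
  "z \<in> sym_center C n \<Longrightarrow> z' \<in> sym_center C n \<Longrightarrow> (\<lambda>K. z K + z' K) \<in> sym_center C n"
  by (simp add: sym_center_def sym_space_add sym_central_add)

lemma sym_center_scale: "z \<in> sym_center C n \<Longrightarrow> (\<lambda>K. c * z K) \<in> sym_center C n"
  by (simp add: sym_center_def sym_space_scale sym_central_scale)

lemma sym_center_unit: "unit_tensor C n \<in> sym_center C n"
  by (simp add: sym_center_def pure_tensor_replicate_in_sym_space sym_central_unit)

lemma gen_alg_subset_sym_center:
  assumes "z \<in> sym_center C n"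
  shows "gen_alg C n z \<subseteq> sym_center C n"
proof
  fix w assume "w \<in> gen_alg C n z"
  then show "w \<in> sym_center C n"
    by induction (auto intro: assms sym_center_unit sym_center_add sym_center_scale sym_center_tmul)
qed

lemma delta_one_eq_diag12:
  "delta_one C (Suc (Suc m)) = (\<lambda>K. 1 / of_nat (dim C) * diag12 C m (unit_tensor C m) K)"
proof
  fix K
  show "delta_one C (Suc (Suc m)) K = 1 / of_nat (dim C) * diag12 C m (unit_tensor C m) K"
  proof (cases "K \<in> valid_idx C (Suc (Suc m))")
    case True
    then obtain c e S where K: "K = c # e # S" "c < dim C" "e < dim C" "S \<in> valid_idx C m"
      by (rule valid_idx_Suc_Suc_cases)
    then have "(\<Sum>i<dim C. pure_tensor C (Suc (Suc m)) ([bvec i, bvec i] @ replicate m (bvec 0)) K)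
        = of_bool (c = e) * unit_tensor C m S"
      by (cases "c = e") (simp_all add: pure_tensor_Cons bvec_apply)
    with K show ?thesis
      by (simp add: delta_one_def diag12_Cons_Cons)
  qed (simp add: delta_one_def diag12_outside pure_tensor_def)
qed

lemma sym_central_delta_one:
  assumes "n \<ge> 2"
  shows "sym_central C n (delta_one C n :: nat list \<Rightarrow> 'a::field_char_0)"
proof -
  obtain m where n: "n = Suc (Suc m)"
    using assms by (metis add_2_eq_Suc le_Suc_ex)
  show ?thesis
    unfolding n delta_one_eq_diag12 by (intro sym_central_scale sym_central_diag12_unit)
qed

lemma sym_central_delta_n:
  assumes "n \<ge> 2"
  shows "sym_central C n (delta_n C n :: nat list \<Rightarrow> 'a::field_char_0)"
  unfolding delta_n_def symmetrize_def
  by (intro sym_central_scale sym_central_sum finite_permutations)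
    (auto intro: sym_central_perm_act sym_central_delta_one[OF assms])

lemma delta_n_in_sym_center:
  "n \<ge> 2 \<Longrightarrow> (delta_n C n :: nat list \<Rightarrow> 'a::field_char_0) \<in> sym_center C n"
  by (simp add: sym_center_def delta_n_def symmetrize_in_sym_space sym_central_delta_n[unfolded delta_n_def])

lemma lemma2p8_field_char_0:
  assumes "n \<ge> 2"
  shows
    "(\<forall>x\<in>sym_space C n. comm_assoc C n (delta_one C n :: nat list \<Rightarrow> 'a::field_char_0) x (sym_space C n))
   \<and> (delta_n C n :: nat list \<Rightarrow> 'a) \<in> sym_space C n
   \<and> (\<forall>x\<in>sym_space C n. comm_assoc C n (delta_n C n :: nat list \<Rightarrow> 'a) x (sym_space C n))
   \<and> (\<forall>a\<in>gen_alg C n (delta_n C n :: nat list \<Rightarrow> 'a). \<forall>b\<in>gen_alg C n (delta_n C n).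
        \<forall>c\<in>gen_alg C n (delta_n C n).
          tmul C n a b = tmul C n b a \<and> tmul C n (tmul C n a b) c = tmul C n a (tmul C n b c))"
proof -
  have center: "(delta_n C n :: nat list \<Rightarrow> 'a) \<in> sym_center C n"
    using assms by (rule delta_n_in_sym_center)
  have "tmul C n a b = tmul C n b a" "tmul C n (tmul C n a b) c = tmul C n a (tmul C n b c)"
    if "a \<in> gen_alg C n (delta_n C n)" "b \<in> gen_alg C n (delta_n C n)" "c \<in> gen_alg C n (delta_n C n)"
    for a b c :: "nat list \<Rightarrow> 'a"
    using that gen_alg_subset_sym_center[OF center]
    by (auto simp: sym_center_def intro: sym_central_commute sym_central_assoc)
  with center sym_central_delta_one[OF assms] show ?thesis
    by (simp add: sym_center_def sym_central_def)
qed

theorem lemma2p8: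
  fixes C :: cd_alg and n :: nat
  assumes "n \<ge> 2"
  shows
    "(\<forall>x\<in>sym_space C n. comm_assoc C n (delta_one C n :: nat list \<Rightarrow> real) x (sym_space C n))
   \<and> (delta_n C n :: nat list \<Rightarrow> real) \<in> sym_space C n
   \<and> (\<forall>x\<in>sym_space C n. comm_assoc C n (delta_n C n :: nat list \<Rightarrow> real) x (sym_space C n))
   \<and> (\<forall>a\<in>gen_alg C n (delta_n C n :: nat list \<Rightarrow> real). \<forall>b\<in>gen_alg C n (delta_n C n).
        \<forall>c\<in>gen_alg C n (delta_n C n).
          tmul C n a b = tmul C n b a \<and> tmul C n (tmul C n a b) c = tmul C n a (tmul C n b c))
   \<and> (\<forall>x\<in>sym_space C n. comm_assoc C n (delta_one C n :: nat list \<Rightarrow> complex) x (sym_space C n))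
   \<and> (delta_n C n :: nat list \<Rightarrow> complex) \<in> sym_space C n
   \<and> (\<forall>x\<in>sym_space C n. comm_assoc C n (delta_n C n :: nat list \<Rightarrow> complex) x (sym_space C n))
   \<and> (\<forall>a\<in>gen_alg C n (delta_n C n :: nat list \<Rightarrow> complex). \<forall>b\<in>gen_alg C n (delta_n C n).
        \<forall>c\<in>gen_alg C n (delta_n C n).
          tmul C n a b = tmul C n b a \<and> tmul C n (tmul C n a b) c = tmul C n a (tmul C n b c))"
  using lemma2p8_field_char_0[OF assms, where 'a = real] lemma2p8_field_char_0[OF assms, where 'a = complex]
  by blast

end
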